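(* Under the hypotheses and notation of the following setting: $Q(z)=\Gamma_0^+(A-z)^{-1}\Gamma_0\in N_\kappa(H)$ with $A$ a bounded self-adjoint operator in a Pontryagin space $K$, $\Gamma_0:H\to K$ bounded, $\Gamma_0^+\Gamma_0$ boundedly invertible, $P:=\Gamma_0(\Gamma_0^+\Gamma_0)^{-1}\Gamma_0^+$, $\tilde A:=(I-P)A(I-P)$ acting in $(I-P)K$, and $\hat Q(z):=-Q(z)^{-1}$, it holds for every $z\in\rho(A)\cap\rho(\tilde A)$ that $$\hat Q(z)\Gamma_0^+=(\Gamma_0^+\Gamma_0)^{-1}\Gamma_0^+\Big\{-I+A(I-P)(\tilde A-z)^{-1}(I-P)\Big\}(A-z).$$
   Context: $H$ is a Hilbert space; $(K,[\cdot,\cdot])$ a Pontryagin space; for bounded $\Gamma_0:H\to K$, $\Gamma_0^+$ is defined by $(h,\Gamma_0^+k)=[\Gamma_0h,k]$. $N_\kappa(H)$ denotes generalized Nevanlinna functions with $\kappa$ negative squares. $(I-P)(\tilde A-z)^{-1}(I-P)$ denotes the operator on $K$ equal to $(\tilde A-z)^{-1}$ on $(I-P)K$ and $0$ on $PK$; $P$ is an orthogonal projection in $K$ with $PK=\Gamma_0(H)$ and $(I-P)K=\ker\Gamma_0^+$. *)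

theory Defs
  imports Complex_Main
begin

class cvec = ab_group_add +
  fixes scaleC :: "complex \<Rightarrow> 'a \<Rightarrow> 'a" (infixr "*\<^sub>C" 75)
  assumes scaleC_add_right: "a *\<^sub>C (x + y) = a *\<^sub>C x + a *\<^sub>C y"
    and scaleC_add_left: "(a + b) *\<^sub>C x = a *\<^sub>C x + b *\<^sub>C x"
    and scaleC_scaleC: "a *\<^sub>C (b *\<^sub>C x) = (a * b) *\<^sub>C x"
    and scaleC_one: "1 *\<^sub>C x = x"

definition clinear :: "('a::cvec \<Rightarrow> 'b::cvec) \<Rightarrow> bool" where
  "clinear T \<longleftrightarrow> (\<forall>x y. T (x + y) = T x + T y) \<and> (\<forall>c x. T (c *\<^sub>C x) = c *\<^sub>C T x)"

definition hermitian_form :: "('a::cvec \<Rightarrow> 'a \<Rightarrow> complex) \<Rightarrow> bool" where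
  "hermitian_form f \<longleftrightarrow>
     (\<forall>x y w. f (x + y) w = f x w + f y w) \<and>
     (\<forall>c x y. f (c *\<^sub>C x) y = c * f x y) \<and>
     (\<forall>x y. f y x = cnj (f x y))"

definition ipnorm :: "('a::cvec \<Rightarrow> 'a \<Rightarrow> complex) \<Rightarrow> 'a \<Rightarrow> real" where
  "ipnorm ip x = sqrt (Re (ip x x))"

definition hilbert_space :: "('a::cvec \<Rightarrow> 'a \<Rightarrow> complex) \<Rightarrow> bool" where
  "hilbert_space ip \<longleftrightarrow> hermitian_form ip \<and>
     (\<forall>x. 0 \<le> Re (ip x x)) \<and> (\<forall>x. ip x x = 0 \<longrightarrow> x = 0) \<and>
     (\<forall>X :: nat \<Rightarrow> 'a.
        (\<forall>e>0. \<exists>N. \<forall>m\<ge>N. \<forall>n\<ge>N. ipnorm ip (X m - X n) < e) \<longrightarrow>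
        (\<exists>L. (\<lambda>n. ipnorm ip (X n - L)) \<longlonglongrightarrow> 0))"

text \<open>The Hilbert inner product of a fundamental symmetry J: (x,y)_J = [Jx,y].\<close>
definition fund_ip :: "('a::cvec \<Rightarrow> 'a \<Rightarrow> complex) \<Rightarrow> ('a \<Rightarrow> 'a) \<Rightarrow> 'a \<Rightarrow> 'a \<Rightarrow> complex" where
  "fund_ip f J x y = f (J x) y"

definition finite_dim_subspace :: "'a::cvec set \<Rightarrow> bool" where
  "finite_dim_subspace S \<longleftrightarrow> (\<exists>B. finite B \<and> B \<subseteq> S \<and>
      (\<forall>x\<in>S. \<exists>c. x = (\<Sum>b\<in>B. c b *\<^sub>C b)))"

text \<open>(K,[.,.]) is a Pontryagin space with fundamental symmetry J: J is a fundamental symmetry,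
  [J.,.] makes K a Hilbert space, and the negative component K_- = ker(I+J) is finite-dimensional.\<close>
definition pontryagin_space :: "('a::cvec \<Rightarrow> 'a \<Rightarrow> complex) \<Rightarrow> ('a \<Rightarrow> 'a) \<Rightarrow> bool" where
  "pontryagin_space f J \<longleftrightarrow> hermitian_form f \<and> clinear J \<and> (\<forall>x. J (J x) = x) \<and>
     (\<forall>x y. f (J x) y = f x (J y)) \<and> hilbert_space (fund_ip f J) \<and>
     finite_dim_subspace {x. J x = - x}"

definition bounded_op :: "('a::cvec \<Rightarrow> 'a \<Rightarrow> complex) \<Rightarrow> ('b::cvec \<Rightarrow> 'b \<Rightarrow> complex) \<Rightarrow> ('a \<Rightarrow> 'b) \<Rightarrow> bool" where
  "bounded_op ipa ipb T \<longleftrightarrow> clinear T \<and> (\<exists>C. \<forall>x. ipnorm ipb (T x) \<le> C * ipnorm ipa x)"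

text \<open>Gp is the adjoint Gamma_0^+ of G : H \<rightarrow> K, i.e. (h, Gp k) = [G h, k].\<close>
definition is_adjoint :: "('h::cvec \<Rightarrow> 'h \<Rightarrow> complex) \<Rightarrow> ('k::cvec \<Rightarrow> 'k \<Rightarrow> complex) \<Rightarrow> ('h \<Rightarrow> 'k) \<Rightarrow> ('k \<Rightarrow> 'h) \<Rightarrow> bool" where
  "is_adjoint ipH f G Gp \<longleftrightarrow> (\<forall>h k. ipH h (Gp k) = f (G h) k)"

definition selfadjoint :: "('k::cvec \<Rightarrow> 'k \<Rightarrow> complex) \<Rightarrow> ('k \<Rightarrow> 'k) \<Rightarrow> bool" where
  "selfadjoint f A \<longleftrightarrow> (\<forall>x y. f (A x) y = f x (A y))"

definition boundedly_invertible :: "('a::cvec \<Rightarrow> 'a \<Rightarrow> complex) \<Rightarrow> ('a \<Rightarrow> 'a) \<Rightarrow> bool" where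
  "boundedly_invertible ip T \<longleftrightarrow> bij T \<and> bounded_op ip ip (inv T)"

definition resolvent :: "'a set \<Rightarrow> ('a::cvec \<Rightarrow> 'a) \<Rightarrow> complex \<Rightarrow> 'a \<Rightarrow> 'a" where
  "resolvent S T z = the_inv_into S (\<lambda>x. T x - z *\<^sub>C x)"

definition resolvent_set :: "('a::cvec \<Rightarrow> 'a \<Rightarrow> complex) \<Rightarrow> 'a set \<Rightarrow> ('a \<Rightarrow> 'a) \<Rightarrow> complex set" where
  "resolvent_set ip S T = {z. bij_betw (\<lambda>x. T x - z *\<^sub>C x) S S \<and>
      (\<exists>C. \<forall>y\<in>S. ipnorm ip (resolvent S T z y) \<le> C * ipnorm ip y)}"

definition Pproj :: "('h \<Rightarrow> 'k) \<Rightarrow> ('k \<Rightarrow> 'h) \<Rightarrow> 'k \<Rightarrow> 'k" where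
  "Pproj G Gp k = G (inv (Gp \<circ> G) (Gp k))"

definition compP :: "('h \<Rightarrow> 'k::cvec) \<Rightarrow> ('k \<Rightarrow> 'h) \<Rightarrow> 'k \<Rightarrow> 'k" where
  "compP G Gp k = k - Pproj G Gp k"

definition Atilde :: "('k::cvec \<Rightarrow> 'k) \<Rightarrow> ('h \<Rightarrow> 'k) \<Rightarrow> ('k \<Rightarrow> 'h) \<Rightarrow> 'k \<Rightarrow> 'k" where
  "Atilde A G Gp x = compP G Gp (A (compP G Gp x))"

definition Qfun :: "('k::cvec \<Rightarrow> 'k) \<Rightarrow> ('h \<Rightarrow> 'k) \<Rightarrow> ('k \<Rightarrow> 'h) \<Rightarrow> complex \<Rightarrow> 'h \<Rightarrow> 'h" where
  "Qfun A G Gp z h = Gp (resolvent UNIV A z (G h))"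

definition Qhat :: "('k::cvec \<Rightarrow> 'k) \<Rightarrow> ('h \<Rightarrow> 'k) \<Rightarrow> ('k \<Rightarrow> 'h) \<Rightarrow> complex \<Rightarrow> 'h \<Rightarrow> 'h::cvec" where
  "Qhat A G Gp z h = - inv (Qfun A G Gp z) h"

text \<open>(I-P)(A~ - z)^{-1}(I-P): equals (A~ - z)^{-1} on (I-P)K and 0 on PK.\<close>
definition compressed_resolvent :: "('k::cvec \<Rightarrow> 'k) \<Rightarrow> ('h \<Rightarrow> 'k) \<Rightarrow> ('k \<Rightarrow> 'h) \<Rightarrow> complex \<Rightarrow> 'k \<Rightarrow> 'k" where
  "compressed_resolvent A G Gp z k =
     compP G Gp (resolvent (range (compP G Gp)) (Atilde A G Gp) z (compP G Gp k))"

end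

theory Submission
  imports Defs
begin

text \<open>
  Then \<open>(I - P)K = ker Gp\<close>, and on this subspace
  \<open>Atilde - z = (I - P)(A - z)\<close>. For \<open>v = (A - z)k\<close> let \<open>u = (Atilde - z)\<^sup>-\<^sup>1(I - P)v\<close>.
  Then \<open>(I - P)(v - (A - z)u) = 0\<close>, so \<open>v - (A - z)u = G w\<close> with
  \<open>w = -(Gp G)\<^sup>-\<^sup>1 Gp(-v + A u)\<close> (using \<open>Gp u = 0\<close>). Consequently \<open>(A - z)\<^sup>-\<^sup>1 G w = k - u\<close>
  and \<open>Q(z) w = Gp k\<close>. Finally \<open>Q(z)\<close> is injective: \<open>Q(z) h = 0\<close> puts \<open>x = (A - z)\<^sup>-\<^sup>1 G h\<close>
  into \<open>ker Gp\<close> with \<open>(Atilde - z) x = (I - P) G h = 0\<close>, so \<open>x = 0\<close> and \<open>h = 0\<close>.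
\<close>

lemma scaleC_diff_right: "a *\<^sub>C (x - y) = a *\<^sub>C x - a *\<^sub>C (y::'a::cvec)"
  by (metis add_diff_cancel diff_add_cancel scaleC_add_right)

lemma scaleC_zero_right [simp]: "a *\<^sub>C (0::'a::cvec) = 0"
  using scaleC_diff_right[of a 0 0] by simp

lemma clinear_add: "clinear T \<Longrightarrow> T (x + y) = T x + T y"
  and clinear_scaleC: "clinear T \<Longrightarrow> T (c *\<^sub>C x) = c *\<^sub>C T x"
  unfolding clinear_def by blast+

lemma clinear_diff:
  assumes "clinear T"
  shows "T (x - y) = T x - T y"
proof -
  have "T (x - y) + T y = T x" using clinear_add[OF assms, of "x - y" y] by simp
  then show ?thesis by (simp add: eq_diff_eq)
qed

lemma clinear_zero: "clinear T \<Longrightarrow> T 0 = 0"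
  using clinear_diff[of T 0 0] by simp

lemma clinear_minus: "clinear T \<Longrightarrow> T (- x) = - T x"
  using clinear_diff[of T 0 x] by (simp add: clinear_zero)

lemma clinear_comp: "clinear S \<Longrightarrow> clinear T \<Longrightarrow> clinear (S \<circ> T)"
  by (simp add: clinear_def)

lemma clinear_shift: "clinear T \<Longrightarrow> clinear (\<lambda>x. T x - z *\<^sub>C x)"
  unfolding clinear_def by (simp add: scaleC_add_right scaleC_scaleC scaleC_diff_right algebra_simps)

lemma clinear_inverse:
  assumes "clinear T" "\<And>x. R (T x) = x" "\<And>y. T (R y) = y"
  shows "clinear R"
  unfolding clinear_def
proof (intro conjI allI)
  fix x y c
  have "R (x + y) = R (T (R x) + T (R y))" by (simp only: assms(3))
  then show "R (x + y) = R x + R y" by (simp only: assms(2) clinear_add[OF assms(1), symmetric])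
  have "R (c *\<^sub>C x) = R (c *\<^sub>C T (R x))" by (simp only: assms(3))
  then show "R (c *\<^sub>C x) = c *\<^sub>C R x" by (simp only: assms(2) clinear_scaleC[OF assms(1), symmetric])
qed

lemma clinear_injI:
  assumes "clinear T" "\<And>x. T x = 0 \<Longrightarrow> x = 0"
  shows "inj T"
proof (rule injI)
  fix x y assume "T x = T y"
  then have "T (x - y) = 0" by (simp add: clinear_diff[OF assms(1)])
  then show "x = y" using assms(2) by fastforce
qed

lemma hermitian_form_add_right: "hermitian_form f \<Longrightarrow> f w (x + y) = f w x + f w y"
  unfolding hermitian_form_def by (metis complex_cnj_add)

lemma hermitian_form_scaleC_right: "hermitian_form f \<Longrightarrow> f x (c *\<^sub>C y) = cnj c * f x y"
  unfolding hermitian_form_def by (metis complex_cnj_mult)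

lemma hilbert_space_eqI:
  assumes "hilbert_space ip" "\<And>w. ip w x = ip w y"
  shows "x = y"
proof -
  have herm: "hermitian_form ip" using assms(1) unfolding hilbert_space_def by blast
  have "ip (x - y) (x - y) = ip (x - y) x - ip (x - y) y"
    using hermitian_form_add_right[OF herm, of "x - y" "x - y" y] by simp
  then have "ip (x - y) (x - y) = 0" using assms(2) by simp
  then have "x - y = 0" using assms(1) unfolding hilbert_space_def by blast
  then show ?thesis by simp
qed

lemma adjoint_clinear:
  assumes "hilbert_space ipH" "hermitian_form f" "is_adjoint ipH f G Gp"
  shows "clinear Gp"
proof -
  have herm: "hermitian_form ipH" using assms(1) unfolding hilbert_space_def by blast
  have adj: "\<And>h k. ipH h (Gp k) = f (G h) k" using assms(3) unfolding is_adjoint_def by blast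
  show ?thesis unfolding clinear_def
    by (intro conjI allI hilbert_space_eqI[OF assms(1)])
      (simp_all add: adj hermitian_form_add_right hermitian_form_scaleC_right herm assms(2))
qed

lemma resolvent_eqI:
  assumes "bij_betw (\<lambda>x. T x - z *\<^sub>C x) S S" "x \<in> S" "T x - z *\<^sub>C x = y"
  shows "resolvent S T z y = x"
  using assms unfolding resolvent_def bij_betw_def by (simp add: the_inv_into_f_eq)

lemma resolvent_mem:
  assumes "bij_betw (\<lambda>x. T x - z *\<^sub>C x) S S" "y \<in> S"
  shows "resolvent S T z y \<in> S"
  using assms unfolding resolvent_def bij_betw_def by (simp add: the_inv_into_into)

lemma resolvent_solves:
  assumes "bij_betw (\<lambda>x. T x - z *\<^sub>C x) S S" "y \<in> S"
  shows "T (resolvent S T z y) - z *\<^sub>C resolvent S T z y = y"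
  using f_the_inv_into_f_bij_betw[OF assms(1)] assms(2) unfolding resolvent_def by blast

lemma clinear_resolvent_UNIV:
  assumes "clinear T" "bij (\<lambda>x. T x - z *\<^sub>C x)"
  shows "clinear (resolvent UNIV T z)"
proof (rule clinear_inverse[OF clinear_shift[OF assms(1), of z]])
  show "resolvent UNIV T z (T x - z *\<^sub>C x) = x" for x
    using assms(2) by (simp add: resolvent_eqI)
  show "T (resolvent UNIV T z y) - z *\<^sub>C resolvent UNIV T z y = y" for y
    using assms(2) by (simp add: resolvent_solves)
qed

locale invertible_gram =
  fixes G :: "'h::cvec \<Rightarrow> 'k::cvec" and Gp :: "'k \<Rightarrow> 'h"
  assumes clinear_G: "clinear G"
    and clinear_Gp: "clinear Gp"
    and bij_gram: "bij (Gp \<circ> G)"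
begin

lemma inv_gram_gram [simp]: "inv (Gp \<circ> G) (Gp (G h)) = h"
  using bij_gram by (metis bij_is_inj comp_apply inv_f_f)

lemma gram_inv_gram [simp]: "Gp (G (inv (Gp \<circ> G) h)) = h"
  using bij_gram by (metis bij_inv_eq_iff comp_apply)

lemma clinear_inv_gram: "clinear (inv (Gp \<circ> G))"
  by (rule clinear_inverse[OF clinear_comp[OF clinear_Gp clinear_G]]) simp_all

lemma compP_eq: "compP G Gp x = x - G (inv (Gp \<circ> G) (Gp x))"
  unfolding compP_def Pproj_def ..

lemma clinear_compP: "clinear (compP G Gp)"
  using clinear_G clinear_Gp clinear_inv_gram
  unfolding clinear_def compP_eq by (simp add: scaleC_diff_right algebra_simps)

lemma Gp_compP [simp]: "Gp (compP G Gp x) = 0"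
  by (simp add: compP_eq clinear_diff[OF clinear_Gp])

lemma compP_G [simp]: "compP G Gp (G h) = 0"
  by (simp add: compP_eq)

lemma compP_eq_self_iff: "compP G Gp x = x \<longleftrightarrow> Gp x = 0"
proof
  assume "compP G Gp x = x"
  then show "Gp x = 0" using Gp_compP[of x] by simp
next
  assume "Gp x = 0"
  then show "compP G Gp x = x"
    by (simp add: compP_eq clinear_zero[OF clinear_inv_gram] clinear_zero[OF clinear_G])
qed

lemma range_compP: "range (compP G Gp) = {x. Gp x = 0}"
proof (intro set_eqI iffI)
  fix x assume "x \<in> {x. Gp x = 0}"
  then have "compP G Gp x = x" by (simp add: compP_eq_self_iff)
  then show "x \<in> range (compP G Gp)" by (metis rangeI)
qed auto

lemma Atilde_shift:
  assumes "Gp x = 0"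
  shows "Atilde A G Gp x - z *\<^sub>C x = compP G Gp (A x - z *\<^sub>C x)"
proof -
  have "compP G Gp x = x" using assms by (simp add: compP_eq_self_iff)
  then show ?thesis
    by (simp add: Atilde_def clinear_diff[OF clinear_compP] clinear_scaleC[OF clinear_compP])
qed

lemma compressed_resolvent_solves:
  fixes y :: 'k
  assumes "bij_betw (\<lambda>x. Atilde A G Gp x - z *\<^sub>C x) (range (compP G Gp)) (range (compP G Gp))"
  defines "u \<equiv> compressed_resolvent A G Gp z y"
  shows "Gp u = 0" and "compP G Gp (A u - z *\<^sub>C u) = compP G Gp y"
proof -
  define r where "r = resolvent (range (compP G Gp)) (Atilde A G Gp) z (compP G Gp y)"
  have "r \<in> range (compP G Gp)"
    unfolding r_def using assms(1) by (rule resolvent_mem) simp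
  then have Gp_r: "Gp r = 0" by (simp add: range_compP)
  then have "u = r"
    unfolding u_def compressed_resolvent_def r_def[symmetric] by (simp add: compP_eq_self_iff)
  then show "Gp u = 0" using Gp_r by simp
  have "Atilde A G Gp r - z *\<^sub>C r = compP G Gp y"
    unfolding r_def using assms(1) by (rule resolvent_solves) simp
  then show "compP G Gp (A u - z *\<^sub>C u) = compP G Gp y"
    using \<open>u = r\<close> Atilde_shift[OF Gp_r] by simp
qed

lemma inj_Qfun:
  assumes "clinear A" and "bij (\<lambda>x. A x - z *\<^sub>C x)"
    and "bij_betw (\<lambda>x. Atilde A G Gp x - z *\<^sub>C x) (range (compP G Gp)) (range (compP G Gp))"
  shows "inj (Qfun A G Gp z)"
proof (rule clinear_injI)
  have "Qfun A G Gp z = Gp \<circ> resolvent UNIV A z \<circ> G"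
    unfolding Qfun_def by auto
  then show "clinear (Qfun A G Gp z)"
    using clinear_G clinear_Gp clinear_resolvent_UNIV[OF assms(1,2)] by (simp add: clinear_comp)
next
  fix h assume "Qfun A G Gp z h = 0"
  define x where "x = resolvent UNIV A z (G h)"
  have shift_x: "A x - z *\<^sub>C x = G h"
    unfolding x_def using assms(2) by (rule resolvent_solves) simp
  have Gp_x: "Gp x = 0"
    using \<open>Qfun A G Gp z h = 0\<close> unfolding Qfun_def x_def .
  have A0: "A 0 = 0" using clinear_zero[OF assms(1)] .
  have "Atilde A G Gp x - z *\<^sub>C x = Atilde A G Gp 0 - z *\<^sub>C 0"
    using Atilde_shift[OF Gp_x] Atilde_shift[of 0] shift_x A0
    by (simp add: clinear_zero[OF clinear_Gp] clinear_zero[OF clinear_compP])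
  moreover have "x \<in> range (compP G Gp)" "0 \<in> range (compP G Gp)"
    using Gp_x clinear_zero[OF clinear_Gp] by (simp_all add: range_compP)
  ultimately have "x = 0"
    using assms(3) unfolding bij_betw_def inj_on_def by blast
  then have "Gp (G h) = 0"
    using shift_x A0 clinear_zero[OF clinear_Gp] by simp
  then show "h = 0"
    using inv_gram_gram[of h] clinear_zero[OF clinear_inv_gram] by simp
qed

lemma Qfun_compression_formula:
  fixes k :: 'k
  assumes "clinear A" and "bij (\<lambda>x. A x - z *\<^sub>C x)"
    and "bij_betw (\<lambda>x. Atilde A G Gp x - z *\<^sub>C x) (range (compP G Gp)) (range (compP G Gp))"
  defines "v \<equiv> A k - z *\<^sub>C k"
  defines "u \<equiv> compressed_resolvent A G Gp z v"
  shows "Qfun A G Gp z (- inv (Gp \<circ> G) (Gp (- v + A (compP G Gp u)))) = Gp k"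
proof -
  have Gp_u: "Gp u = 0" and compP_shift_u: "compP G Gp (A u - z *\<^sub>C u) = compP G Gp v"
    using compressed_resolvent_solves[OF assms(3)] unfolding u_def by blast+
  have compP_u: "compP G Gp u = u" using Gp_u by (simp add: compP_eq_self_iff)
  define y where "y = - v + A u"
  have "compP G Gp (A u) = compP G Gp v + z *\<^sub>C u"
    using compP_shift_u compP_u
    by (simp add: clinear_diff[OF clinear_compP] clinear_scaleC[OF clinear_compP] diff_eq_eq)
  then have "compP G Gp y = z *\<^sub>C u"
    by (simp add: y_def clinear_diff[OF clinear_compP])
  then have "G (- inv (Gp \<circ> G) (Gp y)) = A (k - u) - z *\<^sub>C (k - u)"
    using compP_eq[of y]
    by (simp add: clinear_minus[OF clinear_G] clinear_diff[OF assms(1)] scaleC_diff_right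
        y_def v_def algebra_simps)
  then have "Qfun A G Gp z (- inv (Gp \<circ> G) (Gp y)) = Gp (k - u)"
    unfolding Qfun_def using assms(2) by (simp add: resolvent_eqI)
  then show ?thesis
    using Gp_u compP_u by (simp add: y_def clinear_diff[OF clinear_Gp])
qed

end

theorem corollary1:
  fixes ipH :: "'h::cvec \<Rightarrow> 'h \<Rightarrow> complex"
    and f :: "'k::cvec \<Rightarrow> 'k \<Rightarrow> complex"
    and J :: "'k \<Rightarrow> 'k"
    and A :: "'k \<Rightarrow> 'k"
    and G :: "'h \<Rightarrow> 'k"
    and Gp :: "'k \<Rightarrow> 'h"
    and z :: complex
  assumes "hilbert_space ipH"
    and "pontryagin_space f J"
    and "bounded_op (fund_ip f J) (fund_ip f J) A"
    and "selfadjoint f A"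
    and "bounded_op ipH (fund_ip f J) G"
    and "is_adjoint ipH f G Gp"
    and "boundedly_invertible ipH (Gp \<circ> G)"
    and "z \<in> resolvent_set (fund_ip f J) UNIV A"
    and "z \<in> resolvent_set (fund_ip f J) (range (compP G Gp)) (Atilde A G Gp)"
  shows "\<forall>k. Qhat A G Gp z (Gp k) =
           inv (Gp \<circ> G) (Gp (- (A k - z *\<^sub>C k)
              + A (compP G Gp (compressed_resolvent A G Gp z (A k - z *\<^sub>C k)))))"
proof
  fix k
  have "hermitian_form f" using assms(2) unfolding pontryagin_space_def by blast
  then interpret invertible_gram G Gp
    using assms(1,5,6,7) adjoint_clinear
    by unfold_locales (auto simp: bounded_op_def boundedly_invertible_def)
  have lin_A: "clinear A" using assms(3) unfolding bounded_op_def by blast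
  have bij_A: "bij (\<lambda>x. A x - z *\<^sub>C x)"
    and bij_Atilde: "bij_betw (\<lambda>x. Atilde A G Gp x - z *\<^sub>C x) (range (compP G Gp)) (range (compP G Gp))"
    using assms(8,9) unfolding resolvent_set_def by blast+
  let ?rhs = "inv (Gp \<circ> G) (Gp (- (A k - z *\<^sub>C k)
              + A (compP G Gp (compressed_resolvent A G Gp z (A k - z *\<^sub>C k)))))"
  have "Qfun A G Gp z (- ?rhs) = Gp k"
    by (rule Qfun_compression_formula[OF lin_A bij_A bij_Atilde])
  then have "inv (Qfun A G Gp z) (Gp k) = - ?rhs"
    using inj_Qfun[OF lin_A bij_A bij_Atilde] by (metis inv_f_f)
  then show "Qhat A G Gp z (Gp k) = ?rhs" by (simp add: Qhat_def)
qed

end
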